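(* Let $X$ be a topological space. The following are equivalent: (1) $X$ is nowhere scattered; (2) $X$ has no nonempty, scattered, locally closed subsets; (3) $X$ has no nonempty, locally closed subset that is $T_1$; (4) $X$ has no locally closed subset containing exactly one element.
   Context: A topological space $X$ is nowhere scattered if no closed subset $C\subseteq X$ contains a point that is isolated relative to $C$. A space is scattered if every nonempty closed subset $C$ contains a point isolated relative to $C$. A subset is locally closed if it is relatively open in some closed subset. Subsets carry the subspace topology. *)

theory Defs
  imports "HOL-Analysis.Analysis"
begin

definition isolated_rel :: "'a topology \<Rightarrow> 'a set \<Rightarrow> 'a \<Rightarrow> bool" where
  "isolated_rel X C x \<longleftrightarrow> x \<in> C \<and> openin (subtopology X C) {x}"

definition nowhere_scattered :: "'a topology \<Rightarrow> bool" where
  "nowhere_scattered X \<longleftrightarrow> \<not> (\<exists>C x. closedin X C \<and> isolated_rel X C x)"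

definition scattered_space :: "'a topology \<Rightarrow> bool" where
  "scattered_space X \<longleftrightarrow>
     (\<forall>C. closedin X C \<and> C \<noteq> {} \<longrightarrow> (\<exists>x. isolated_rel X C x))"

definition locally_closedin :: "'a topology \<Rightarrow> 'a set \<Rightarrow> bool" where
  "locally_closedin X S \<longleftrightarrow>
     (\<exists>C. closedin X C \<and> S \<subseteq> C \<and> openin (subtopology X C) S)"

end

theory Submission
  imports Defs
begin

text \<open>All four conditions say that no singleton is locally closed. A singleton \<open>{x}\<close> is locally
closed exactly when \<open>x\<close> is isolated in some closed set, and singleton subspaces are scattered
and \<open>T\<^sub>1\<close>. Conversely, a nonempty scattered space has an open point and a nonempty \<open>T\<^sub>1\<close> space
has a closed point, and open as well as closed subsets of a locally closed set are locally
closed.\<close>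

lemma locally_closedin_subset: "locally_closedin X S \<Longrightarrow> S \<subseteq> topspace X"
  unfolding locally_closedin_def by (auto dest: closedin_subset)

lemma locally_closedin_iff_Int:
  "locally_closedin X S \<longleftrightarrow> (\<exists>U C. openin X U \<and> closedin X C \<and> S = U \<inter> C)"
  unfolding locally_closedin_def openin_subtopology by blast

lemma locally_closedin_closedin_subtopology:
  assumes "locally_closedin X S" "closedin (subtopology X S) T"
  shows "locally_closedin X T"
proof -
  obtain U C where "openin X U" "closedin X C" "S = U \<inter> C"
    using assms(1) by (auto simp: locally_closedin_iff_Int)
  moreover obtain D where "closedin X D" "T = D \<inter> S"
    using assms(2) by (auto simp: closedin_subtopology)
  ultimately have "openin X U \<and> closedin X (C \<inter> D) \<and> T = U \<inter> (C \<inter> D)"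
    by auto
  then show ?thesis
    unfolding locally_closedin_iff_Int by blast
qed

lemma locally_closedin_openin_subtopology:
  assumes "locally_closedin X S" "openin (subtopology X S) T"
  shows "locally_closedin X T"
proof -
  obtain U C where "openin X U" "closedin X C" "S = U \<inter> C"
    using assms(1) by (auto simp: locally_closedin_iff_Int)
  moreover obtain V where "openin X V" "T = V \<inter> S"
    using assms(2) by (auto simp: openin_subtopology)
  ultimately have "openin X (V \<inter> U) \<and> closedin X C \<and> T = (V \<inter> U) \<inter> C"
    by auto
  then show ?thesis
    unfolding locally_closedin_iff_Int by blast
qed

lemma locally_closedin_singleton:
  "locally_closedin X {x} \<longleftrightarrow> (\<exists>C. closedin X C \<and> isolated_rel X C x)"
  unfolding locally_closedin_def isolated_rel_def by auto

lemma nowhere_scattered_iff_no_locally_closed_singleton: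
  "nowhere_scattered X \<longleftrightarrow> (\<nexists>x. locally_closedin X {x})"
  unfolding nowhere_scattered_def locally_closedin_singleton by blast

lemma scattered_space_subtopology_singleton:
  assumes "x \<in> topspace X"
  shows "scattered_space (subtopology X {x})"
  unfolding scattered_space_def
proof (intro allI impI)
  fix C
  assume "closedin (subtopology X {x}) C \<and> C \<noteq> {}"
  then have "C = {x}"
    using closedin_subset assms by fastforce
  then show "\<exists>y. isolated_rel (subtopology X {x}) C y"
    using assms by (auto simp: isolated_rel_def subtopology_subtopology openin_subtopology_refl)
qed

lemma t1_space_subtopology_singleton: "t1_space (subtopology X {x})"
  unfolding t1_space_def by auto

lemma scattered_space_obtains_open_singleton:
  assumes "scattered_space X" "topspace X \<noteq> {}"
  obtains x where "x \<in> topspace X" "openin X {x}"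
proof -
  obtain x where "isolated_rel X (topspace X) x"
    using assms unfolding scattered_space_def by blast
  then show thesis
    using that by (auto simp: isolated_rel_def)
qed

lemma locally_closed_singleton_iff_scattered:
  "(\<exists>x. locally_closedin X {x})
     \<longleftrightarrow> (\<exists>S. S \<noteq> {} \<and> locally_closedin X S \<and> scattered_space (subtopology X S))"
proof
  assume "\<exists>x. locally_closedin X {x}"
  then obtain x where "locally_closedin X {x}" ..
  moreover have "scattered_space (subtopology X {x})"
    using locally_closedin_subset[OF \<open>locally_closedin X {x}\<close>]
    by (simp add: scattered_space_subtopology_singleton)
  ultimately show "\<exists>S. S \<noteq> {} \<and> locally_closedin X S \<and> scattered_space (subtopology X S)"
    by blast
next
  assume "\<exists>S. S \<noteq> {} \<and> locally_closedin X S \<and> scattered_space (subtopology X S)"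
  then obtain S where S: "S \<noteq> {}" "locally_closedin X S" "scattered_space (subtopology X S)"
    by blast
  then have "topspace (subtopology X S) = S"
    using locally_closedin_subset[OF S(2)] by auto
  then obtain x where "openin (subtopology X S) {x}"
    using S by (metis scattered_space_obtains_open_singleton)
  then show "\<exists>x. locally_closedin X {x}"
    using locally_closedin_openin_subtopology S(2) by blast
qed

lemma locally_closed_singleton_iff_t1:
  "(\<exists>x. locally_closedin X {x})
     \<longleftrightarrow> (\<exists>S. S \<noteq> {} \<and> locally_closedin X S \<and> t1_space (subtopology X S))"
proof
  assume "\<exists>x. locally_closedin X {x}"
  then obtain x where "locally_closedin X {x}" ..
  then show "\<exists>S. S \<noteq> {} \<and> locally_closedin X S \<and> t1_space (subtopology X S)"
    using t1_space_subtopology_singleton[of X x] by blast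
next
  assume "\<exists>S. S \<noteq> {} \<and> locally_closedin X S \<and> t1_space (subtopology X S)"
  then obtain S x where S: "locally_closedin X S" "t1_space (subtopology X S)" and "x \<in> S"
    by blast
  moreover have "topspace (subtopology X S) = S"
    using locally_closedin_subset[OF S(1)] by auto
  ultimately have "closedin (subtopology X S) {x}"
    using closedin_t1_singleton[OF S(2)] by simp
  then show "\<exists>x. locally_closedin X {x}"
    using locally_closedin_closedin_subtopology S(1) by blast
qed

theorem mainTheorem10:
  fixes X :: "'a topology"
  shows "(nowhere_scattered X
           \<longleftrightarrow> \<not> (\<exists>S. S \<noteq> {} \<and> locally_closedin X S \<and> scattered_space (subtopology X S)))
       \<and> (nowhere_scattered X
           \<longleftrightarrow> \<not> (\<exists>S. S \<noteq> {} \<and> locally_closedin X S \<and> t1_space (subtopology X S)))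
       \<and> (nowhere_scattered X
           \<longleftrightarrow> \<not> (\<exists>S. locally_closedin X S \<and> card S = 1))"
proof -
  have "(\<exists>x. locally_closedin X {x}) \<longleftrightarrow> (\<exists>S. locally_closedin X S \<and> card S = 1)"
    by (auto simp: card_1_singleton_iff)
  then show ?thesis
    using nowhere_scattered_iff_no_locally_closed_singleton[of X]
      locally_closed_singleton_iff_scattered[of X] locally_closed_singleton_iff_t1[of X]
    by (simp only:)
qed

end
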